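(* Let $G$ be a group and $(A,B)$ a VH-structure in $G$. Let $S_{A,B}$ be the square complex with a single vertex $x$, oriented edge set $A\sqcup B$ with orientation reversal $e\mapsto e^{-1}$, and with one square for each relation $ab = b'a'$ in $G$ with $a,a'\in A$, $b,b'\in B$, namely the square given by the 4-tuple $(a,b,a'^{-1},b'^{-1})$, where the four 4-tuples $(a,b,a'^{-1},b'^{-1})$, $(a',b^{-1},a^{-1},b')$, $(a^{-1},b',a',b^{-1})$, $(a'^{-1},b'^{-1},a,b)$ (coming from the equivalent relations $a'b^{-1}=b'^{-1}a$, $a^{-1}b'=ba'^{-1}$, $a'^{-1}b'^{-1}=b^{-1}a^{-1}$) define the same square. Then the link $\mathrm{Lk}_x$ of $S_{A,B}$ at $x$ is the complete bipartite graph with one class of vertices labelled by $A$ and the other labelled by $B$.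
   Context: A VH-structure in a group $G$ is an ordered pair $(A,B)$ of finite subsets of $G$ such that: (1) taking inverses induces fixed-point-free involutions on $A$ and on $B$; (2) $A\cup B$ generates $G$; (3) the product sets $AB$ and $BA$ have size $\#A\cdot\#B$ and $AB=BA$; (4) $AB$ and $BA$ contain no elements of order $2$. The link $\mathrm{Lk}_x$ at a vertex $x$ of a square complex is the (multi-)graph whose vertices are the oriented edges originating at $x$ and whose edges joining $a,b$ are the corners of squares at $x$ containing the edges $a$ and $b$. *)

theory Defs
  imports "HOL-Algebra.Algebra" "HOL-Library.Multiset"
begin

definition VH_structure :: "('a, 'b) monoid_scheme \<Rightarrow> 'a set \<Rightarrow> 'a set \<Rightarrow> bool" where
  "VH_structure G A B \<longleftrightarrow>
     finite A \<and> finite B \<and> A \<subseteq> carrier G \<and> B \<subseteq> carrier G \<and>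
     (\<forall>a\<in>A. inv\<^bsub>G\<^esub> a \<in> A \<and> inv\<^bsub>G\<^esub> a \<noteq> a) \<and>
     (\<forall>b\<in>B. inv\<^bsub>G\<^esub> b \<in> B \<and> inv\<^bsub>G\<^esub> b \<noteq> b) \<and>
     generate G (A \<union> B) = carrier G \<and>
     card (A <#>\<^bsub>G\<^esub> B) = card A * card B \<and>
     card (B <#>\<^bsub>G\<^esub> A) = card A * card B \<and>
     A <#>\<^bsub>G\<^esub> B = B <#>\<^bsub>G\<^esub> A \<and>
     (\<forall>g \<in> A <#>\<^bsub>G\<^esub> B. group.ord G g \<noteq> 2) \<and>
     (\<forall>g \<in> B <#>\<^bsub>G\<^esub> A. group.ord G g \<noteq> 2)"

(* Oriented edges of S_{A,B}: the disjoint union A \<squnion> B, encoded as Inl a / Inr b *)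
fun edge_rev :: "('a, 'b) monoid_scheme \<Rightarrow> 'a + 'a \<Rightarrow> 'a + 'a" where
  "edge_rev G (Inl a) = Inl (inv\<^bsub>G\<^esub> a)"
| "edge_rev G (Inr b) = Inr (inv\<^bsub>G\<^esub> b)"

type_synonym 'e tuple4 = "'e \<times> 'e \<times> 'e \<times> 'e"

definition rel_tuple :: "('a, 'b) monoid_scheme \<Rightarrow> 'a \<Rightarrow> 'a \<Rightarrow> 'a \<Rightarrow> 'a \<Rightarrow> ('a + 'a) tuple4" where
  "rel_tuple G a b a' b' = (Inl a, Inr b, Inl (inv\<^bsub>G\<^esub> a'), Inr (inv\<^bsub>G\<^esub> b'))"

(* The square of the relation a b = b' a': the set of its four defining 4-tuples *)
definition rel_square :: "('a, 'b) monoid_scheme \<Rightarrow> 'a \<Rightarrow> 'a \<Rightarrow> 'a \<Rightarrow> 'a \<Rightarrow> ('a + 'a) tuple4 set" where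
  "rel_square G a b a' b' =
     {rel_tuple G a b a' b',
      (Inl a', Inr (inv\<^bsub>G\<^esub> b), Inl (inv\<^bsub>G\<^esub> a), Inr b'),
      (Inl (inv\<^bsub>G\<^esub> a), Inr b', Inl a', Inr (inv\<^bsub>G\<^esub> b)),
      (Inl (inv\<^bsub>G\<^esub> a'), Inr (inv\<^bsub>G\<^esub> b'), Inl a, Inr b)}"

definition SAB_squares :: "('a, 'b) monoid_scheme \<Rightarrow> 'a set \<Rightarrow> 'a set \<Rightarrow> ('a + 'a) tuple4 set set" where
  "SAB_squares G A B =
     {rel_square G a b a' b' | a b a' b'.
        a \<in> A \<and> a' \<in> A \<and> b \<in> B \<and> b' \<in> B \<and> a \<otimes>\<^bsub>G\<^esub> b = b' \<otimes>\<^bsub>G\<^esub> a'}"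

(* Corners of a square with boundary path (e1,e2,e3,e4): the corner between e_i and e_(i+1)
   contains the oriented edges e_i^-1 and e_(i+1) originating at that corner;
   each corner is a link edge, recorded by its 2-element multiset of endpoints. *)
fun tuple_corners :: "('a, 'b) monoid_scheme \<Rightarrow> ('a + 'a) tuple4 \<Rightarrow> ('a + 'a) multiset multiset" where
  "tuple_corners G (e1, e2, e3, e4) =
     {# {#edge_rev G e1, e2#}, {#edge_rev G e2, e3#}, {#edge_rev G e3, e4#}, {#edge_rev G e4, e1#} #}"

(* The link Lk_x of S_{A,B} at its unique vertex x, as a multigraph:
   (vertex set, multiset of edges, each edge given by its multiset of endpoints) *)
definition SAB_link :: "('a, 'b) monoid_scheme \<Rightarrow> 'a set \<Rightarrow> 'a set
     \<Rightarrow> ('a + 'a) set \<times> ('a + 'a) multiset multiset" where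
  "SAB_link G A B =
     (Inl ` A \<union> Inr ` B,
      \<Sum>s\<in>SAB_squares G A B. tuple_corners G (SOME t. t \<in> s))"

definition complete_bipartite :: "'a set \<Rightarrow> 'a set \<Rightarrow> ('a + 'a) set \<times> ('a + 'a) multiset multiset" where
  "complete_bipartite A B =
     (Inl ` A \<union> Inr ` B, mset_set {{#Inl a, Inr b#} | a b. a \<in> A \<and> b \<in> B})"

end

theory Submission
  imports Defs
begin

text \<open>
  Since \<open>AB = BA\<close> and multiplication is injective on \<open>B \<times> A\<close>, each pair
  \<open>(a, b) \<in> A \<times> B\<close> lies in exactly one relation \<open>ab = b'a'\<close>. Read a 4-tuple
  \<open>(a, b, \<dots>)\<close> through its leading corner \<open>{a\<inverse>, b}\<close>. The four corners of a square
  are the leading corners of its four 4-tuples, and these are pairwise distinct because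
  inversion has no fixed points on \<open>A\<close> and \<open>B\<close> and no \<open>ab\<close> has order 2. Distinct
  squares share no 4-tuple, so the edges of the link correspond bijectively to the 4-tuples
  of all squares, hence to the relations, hence to \<open>A \<times> B\<close>; the relation of \<open>(a, b)\<close>
  contributes the edge joining \<open>a\<inverse>\<close> and \<open>b\<close>.
\<close>

definition relations :: "('a, 'b) monoid_scheme \<Rightarrow> 'a set \<Rightarrow> 'a set \<Rightarrow> ('a \<times> 'a \<times> 'a \<times> 'a) set"
  where "relations G A B =
    {(a, b, a', b'). a \<in> A \<and> b \<in> B \<and> a' \<in> A \<and> b' \<in> B \<and> a \<otimes>\<^bsub>G\<^esub> b = b' \<otimes>\<^bsub>G\<^esub> a'}"

fun lead_corner :: "('a, 'b) monoid_scheme \<Rightarrow> ('a + 'a) tuple4 \<Rightarrow> ('a + 'a) multiset" where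
  "lead_corner G (e1, e2, e3, e4) = {#edge_rev G e1, e2#}"

lemma lead_corner_rel_tuple [simp]:
  "lead_corner G (rel_tuple G a b a' b') = {#Inl (inv\<^bsub>G\<^esub> a), Inr b#}"
  by (simp add: rel_tuple_def)

lemma Inl_Inr_mset_eq_iff: "{#Inl x, Inr y#} = {#Inl z, Inr w#} \<longleftrightarrow> x = z \<and> y = w"
  by (auto simp: add_eq_conv_diff)

lemma SAB_squares_eq_image:
  "SAB_squares G A B = (\<lambda>(a, b, a', b'). rel_square G a b a' b') ` relations G A B"
  unfolding SAB_squares_def relations_def by force

lemma rel_tuple_mem_rel_square: "rel_tuple G a b a' b' \<in> rel_square G a b a' b'"
  by (simp add: rel_square_def)

context group
begin

lemma inj_on_mult_if_card_set_mult:
  assumes "finite P" "finite Q" "P \<subseteq> carrier G" "Q \<subseteq> carrier G"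
    and "card (P <#> Q) = card P * card Q"
  shows "inj_on (\<lambda>(x, y). x \<otimes> y) (P \<times> Q)"
proof -
  have "P <#> Q = (\<lambda>(x, y). x \<otimes> y) ` (P \<times> Q)"
    unfolding set_mult_def by auto
  with assms show ?thesis
    by (intro eq_card_imp_inj_on) (auto simp: card_cartesian_product)
qed

lemma ord_eq_2_if_self_inverse:
  assumes "x \<in> carrier G" "x \<otimes> x = \<one>" "x \<noteq> \<one>"
  shows "ord x = 2"
proof -
  have "x [^] (2::nat) = \<one>"
    using assms by (simp add: numeral_2_eq_2 nat_pow_mult)
  then have "ord x dvd 2"
    using assms(1) by (simp add: pow_eq_id)
  moreover have "ord x \<noteq> 1"
    using assms ord_eq_1 by blast
  ultimately show ?thesis
    using two_is_prime_nat prime_nat_iff by blast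
qed

lemma rel_tuple_eq_iff:
  assumes "{a, b, a', b', c, d, c', d'} \<subseteq> carrier G"
  shows "rel_tuple G a b a' b' = rel_tuple G c d c' d' \<longleftrightarrow> (a, b, a', b') = (c, d, c', d')"
  using assms by (auto simp: rel_tuple_def)

lemma relation_variants:
  assumes carrier: "{a, b, a', b'} \<subseteq> carrier G" and rel: "a \<otimes> b = b' \<otimes> a'"
  shows "a' \<otimes> inv b = inv b' \<otimes> a"
    and "inv a \<otimes> b' = b \<otimes> inv a'"
    and "inv a' \<otimes> inv b' = inv b \<otimes> inv a"
proof -
  have "inv b' \<otimes> a = inv b' \<otimes> (a \<otimes> b) \<otimes> inv b"
    using carrier by (simp add: m_assoc)
  also have "\<dots> = a' \<otimes> inv b"
    using carrier rel by (simp add: m_assoc[symmetric])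
  finally show "a' \<otimes> inv b = inv b' \<otimes> a" by simp
  have "b \<otimes> inv a' = inv a \<otimes> (a \<otimes> b) \<otimes> inv a'"
    using carrier by (simp add: m_assoc[symmetric])
  also have "\<dots> = inv a \<otimes> b'"
    using carrier rel by (simp add: m_assoc)
  finally show "inv a \<otimes> b' = b \<otimes> inv a'" by simp
  show "inv a' \<otimes> inv b' = inv b \<otimes> inv a"
    using carrier rel by (metis inv_mult_group insert_subset)
qed

lemma rel_square_variants:
  assumes "{a, b, a', b'} \<subseteq> carrier G"
  shows "rel_square G a' (inv b) a (inv b') = rel_square G a b a' b'"
    and "rel_square G (inv a) b' (inv a') b = rel_square G a b a' b'"
    and "rel_square G (inv a') (inv b') (inv a) (inv b) = rel_square G a b a' b'"
  using assms by (auto simp: rel_square_def rel_tuple_def)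

lemma rel_square_eq:
  assumes "{a, b, a', b'} \<subseteq> carrier G"
  shows "rel_square G a b a' b' =
    {rel_tuple G a b a' b', rel_tuple G a' (inv b) a (inv b'),
     rel_tuple G (inv a) b' (inv a') b, rel_tuple G (inv a') (inv b') (inv a) (inv b)}"
  using assms by (simp add: rel_square_def rel_tuple_def)

lemma tuple_corners_rel_square:
  assumes carrier: "{a, b, a', b'} \<subseteq> carrier G"
    and card: "card (rel_square G a b a' b') = 4"
    and t: "t \<in> rel_square G a b a' b'"
  shows "tuple_corners G t = (\<Sum>u\<in>rel_square G a b a' b'. {#lead_corner G u#})"
proof -
  have "distinct [rel_tuple G a b a' b', rel_tuple G a' (inv b) a (inv b'),
      rel_tuple G (inv a) b' (inv a') b, rel_tuple G (inv a') (inv b') (inv a) (inv b)]"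
    using card unfolding rel_square_eq[OF carrier]
    by (auto simp: card_insert_if split: if_splits)
  then have "(\<Sum>u\<in>rel_square G a b a' b'. {#lead_corner G u#}) =
      {#{#Inl (inv a), Inr b#}, {#Inl (inv a'), Inr (inv b)#},
        {#Inl a, Inr b'#}, {#Inl a', Inr (inv b')#}#}"
    using carrier unfolding rel_square_eq[OF carrier] by simp
  also have "\<dots> = tuple_corners G t"
    using carrier t by (auto simp: rel_square_def rel_tuple_def add_mset_commute)
  finally show ?thesis by simp
qed

end

locale vh_group = group G for G (structure) +
  fixes A B :: "'a set"
  assumes VH: "VH_structure G A B"
begin

lemma finite_A: "finite A" and finite_B: "finite B"
  and A_carrier: "A \<subseteq> carrier G" and B_carrier: "B \<subseteq> carrier G"
  and inv_mem_A: "a \<in> A \<Longrightarrow> inv a \<in> A" and inv_neq_A: "a \<in> A \<Longrightarrow> inv a \<noteq> a"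
  and inv_mem_B: "b \<in> B \<Longrightarrow> inv b \<in> B" and inv_neq_B: "b \<in> B \<Longrightarrow> inv b \<noteq> b"
  and set_mult_AB_comm: "A <#> B = B <#> A"
  and ord_neq_2: "g \<in> A <#> B \<Longrightarrow> ord g \<noteq> 2"
  using VH unfolding VH_structure_def by auto

lemma inj_on_mult_AB: "inj_on (\<lambda>(x, y). x \<otimes> y) (A \<times> B)"
  using VH finite_A finite_B A_carrier B_carrier
  by (intro inj_on_mult_if_card_set_mult) (auto simp: VH_structure_def)

lemma inj_on_mult_BA: "inj_on (\<lambda>(x, y). x \<otimes> y) (B \<times> A)"
  using VH finite_A finite_B A_carrier B_carrier
  by (intro inj_on_mult_if_card_set_mult) (auto simp: VH_structure_def mult.commute)

lemma relations_carrier: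
  "(a, b, a', b') \<in> relations G A B \<Longrightarrow> {a, b, a', b'} \<subseteq> carrier G"
  using A_carrier B_carrier by (auto simp: relations_def)

lemma relations_exist:
  assumes "a \<in> A" "b \<in> B"
  obtains a' b' where "(a, b, a', b') \<in> relations G A B"
proof -
  have "a \<otimes> b \<in> B <#> A"
    using assms set_mult_AB_comm unfolding set_mult_def by blast
  then obtain b' a' where "b' \<in> B" "a' \<in> A" "a \<otimes> b = b' \<otimes> a'"
    unfolding set_mult_def by auto
  with assms that show ?thesis
    by (auto simp: relations_def)
qed

lemma relations_unique:
  assumes "(a, b, a1, b1) \<in> relations G A B" "(a, b, a2, b2) \<in> relations G A B"
  shows "a1 = a2 \<and> b1 = b2"
proof -
  have "(b1, a1) = (b2, a2)"
    using assms inj_onD[OF inj_on_mult_BA, of "(b1, a1)" "(b2, a2)"]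
    by (auto simp: relations_def)
  then show ?thesis by simp
qed

lemma relations_closed:
  assumes "(a, b, a', b') \<in> relations G A B"
  shows "(a', inv b, a, inv b') \<in> relations G A B"
    and "(inv a, b', inv a', b) \<in> relations G A B"
    and "(inv a', inv b', inv a, inv b) \<in> relations G A B"
  using assms relation_variants[OF relations_carrier[OF assms]] inv_mem_A inv_mem_B
  by (auto simp: relations_def)

lemma relation_not_inverse:
  assumes rel: "(a, b, inv a, inv b) \<in> relations G A B"
  shows False
proof -
  have mem: "a \<in> A" "b \<in> B" and carrier: "a \<in> carrier G" "b \<in> carrier G"
    using rel relations_carrier by (auto simp: relations_def)
  have "a \<otimes> b = inv (a \<otimes> b)"
    using rel carrier by (simp add: relations_def inv_mult_group)
  then have "(a \<otimes> b) \<otimes> (a \<otimes> b) = \<one>"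
    using carrier by (metis m_closed r_inv)
  moreover have "ord (a \<otimes> b) \<noteq> 2"
    using mem by (intro ord_neq_2) (auto simp: set_mult_def)
  ultimately have "a \<otimes> b = \<one>"
    using carrier ord_eq_2_if_self_inverse by blast
  then have inv_b: "inv b = a"
    using carrier by (intro inv_equality)
  then have b: "b = inv a"
    using carrier(2) inv_inv by metis
  have "a \<in> B"
    using inv_mem_B[OF mem(2)] inv_b by simp
  then have "(a, inv a) \<in> A \<times> B" "(inv a, a) \<in> A \<times> B"
    using mem b inv_mem_A by auto
  moreover have "a \<otimes> inv a = inv a \<otimes> a"
    using carrier by simp
  ultimately have "a = inv a"
    using inj_onD[OF inj_on_mult_AB, of "(a, inv a)" "(inv a, a)"] by auto
  with mem show False
    using inv_neq_A by metis
qed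

lemma card_rel_square:
  assumes rel: "(a, b, a', b') \<in> relations G A B"
  shows "card (rel_square G a b a' b') = 4"
proof -
  have mem: "a \<in> A" "b \<in> B" "a' \<in> A" "b' \<in> B"
    using rel by (auto simp: relations_def)
  have carrier: "{a, b, a', b'} \<subseteq> carrier G"
    using relations_carrier[OF rel] .
  have "a \<noteq> inv a" "b \<noteq> inv b" "a' \<noteq> inv a'" "b' \<noteq> inv b'"
    using mem inv_neq_A inv_neq_B by metis+
  moreover have "\<not> (a' = inv a \<and> b' = inv b)" "\<not> (a = inv a' \<and> b = inv b')"
    using rel carrier relation_not_inverse by (metis insert_subset inv_inv)+
  ultimately have "distinct [rel_tuple G a b a' b', rel_tuple G a' (inv b) a (inv b'),
      rel_tuple G (inv a) b' (inv a') b, rel_tuple G (inv a') (inv b') (inv a) (inv b)]"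
    using carrier by (auto simp: rel_tuple_def)
  then show ?thesis
    using distinct_card unfolding rel_square_eq[OF carrier] by fastforce
qed

lemma mem_SAB_squaresE:
  assumes "s \<in> SAB_squares G A B" "t \<in> s"
  obtains a b a' b' where "(a, b, a', b') \<in> relations G A B"
    and "t = rel_tuple G a b a' b'" and "s = rel_square G a b a' b'"
proof -
  obtain a b a' b' where rel: "(a, b, a', b') \<in> relations G A B"
    and s: "s = rel_square G a b a' b'"
    using assms(1) unfolding SAB_squares_eq_image by auto
  note carrier = relations_carrier[OF rel]
  from assms(2) consider "t = rel_tuple G a b a' b'"
    | "t = rel_tuple G a' (inv b) a (inv b')"
    | "t = rel_tuple G (inv a) b' (inv a') b"
    | "t = rel_tuple G (inv a') (inv b') (inv a) (inv b)"
    unfolding s rel_square_eq[OF carrier] by blast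
  then show ?thesis
    by cases (metis that rel relations_closed[OF rel] rel_square_variants[OF carrier] s)+
qed

lemma SAB_squares_disjoint:
  assumes "s1 \<in> SAB_squares G A B" "s2 \<in> SAB_squares G A B" "s1 \<noteq> s2"
  shows "s1 \<inter> s2 = {}"
proof (rule ccontr)
  assume "s1 \<inter> s2 \<noteq> {}"
  then obtain t where "t \<in> s1" "t \<in> s2" by blast
  with assms(1,2) obtain a b a' b' c d c' d'
    where rel1: "(a, b, a', b') \<in> relations G A B" "t = rel_tuple G a b a' b'"
      "s1 = rel_square G a b a' b'"
    and rel2: "(c, d, c', d') \<in> relations G A B" "t = rel_tuple G c d c' d'"
      "s2 = rel_square G c d c' d'"
    by (metis mem_SAB_squaresE)
  have "(a, b, a', b') = (c, d, c', d')"
    using rel1(1,2) rel2(1,2) relations_carrier rel_tuple_eq_iff by (metis insert_subset)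
  with rel1(3) rel2(3) assms(3) show False by simp
qed

lemma Union_SAB_squares:
  "\<Union>(SAB_squares G A B) = (\<lambda>(a, b, a', b'). rel_tuple G a b a' b') ` relations G A B"
proof
  show "\<Union>(SAB_squares G A B) \<subseteq> (\<lambda>(a, b, a', b'). rel_tuple G a b a' b') ` relations G A B"
  proof
    fix t assume "t \<in> \<Union>(SAB_squares G A B)"
    then obtain s where "s \<in> SAB_squares G A B" "t \<in> s" by blast
    then obtain a b a' b' where "(a, b, a', b') \<in> relations G A B" "t = rel_tuple G a b a' b'"
      by (rule mem_SAB_squaresE)
    then show "t \<in> (\<lambda>(a, b, a', b'). rel_tuple G a b a' b') ` relations G A B"
      by force
  qed
  show "(\<lambda>(a, b, a', b'). rel_tuple G a b a' b') ` relations G A B \<subseteq> \<Union>(SAB_squares G A B)"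
  proof
    fix t assume "t \<in> (\<lambda>(a, b, a', b'). rel_tuple G a b a' b') ` relations G A B"
    then obtain a b a' b' where rel: "(a, b, a', b') \<in> relations G A B"
      and t: "t = rel_tuple G a b a' b'"
      by auto
    have "rel_square G a b a' b' \<in> SAB_squares G A B"
      unfolding SAB_squares_eq_image using rel by force
    then show "t \<in> \<Union>(SAB_squares G A B)"
      unfolding t using rel_tuple_mem_rel_square by (rule UnionI)
  qed
qed

lemma SAB_link_edges:
  "snd (SAB_link G A B) = (\<Sum>t\<in>\<Union>(SAB_squares G A B). {#lead_corner G t#})"
proof -
  have corners: "tuple_corners G (SOME t. t \<in> s) = (\<Sum>t\<in>s. {#lead_corner G t#})"
    if square: "s \<in> SAB_squares G A B" for s
  proof -
    obtain a b a' b' where rel: "(a, b, a', b') \<in> relations G A B"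
      and s: "s = rel_square G a b a' b'"
      using square unfolding SAB_squares_eq_image by auto
    \<comment> \<open>Every 4-tuple of \<open>s\<close> has the same corners, so the choice made by \<open>SOME\<close> is irrelevant.\<close>
    have "(SOME t. t \<in> s) \<in> s"
      unfolding s using rel_tuple_mem_rel_square by (rule someI)
    with s show ?thesis
      using tuple_corners_rel_square relations_carrier[OF rel] card_rel_square[OF rel] by simp
  qed
  have "(\<Sum>t\<in>\<Union>(SAB_squares G A B). {#lead_corner G t#}) =
      (\<Sum>s\<in>SAB_squares G A B. \<Sum>t\<in>s. {#lead_corner G t#})"
    using SAB_squares_disjoint
    by (subst sum.Union_disjoint) (auto simp: SAB_squares_eq_image rel_square_def)
  also have "\<dots> = snd (SAB_link G A B)"
    using corners by (simp add: SAB_link_def)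
  finally show ?thesis by simp
qed

lemma inj_on_lead_corner: "inj_on (lead_corner G) (\<Union>(SAB_squares G A B))"
proof (rule inj_onI)
  fix t u
  assume "t \<in> \<Union>(SAB_squares G A B)" "u \<in> \<Union>(SAB_squares G A B)"
    and corner: "lead_corner G t = lead_corner G u"
  then obtain a b a' b' c d c' d'
    where rel1: "(a, b, a', b') \<in> relations G A B" "t = rel_tuple G a b a' b'"
    and rel2: "(c, d, c', d') \<in> relations G A B" "u = rel_tuple G c d c' d'"
    unfolding Union_SAB_squares by auto
  have "inv a = inv c" "b = d"
    using corner rel1(2) rel2(2) by (simp_all add: Inl_Inr_mset_eq_iff)
  then have "a = c"
    using relations_carrier[OF rel1(1)] relations_carrier[OF rel2(1)] inv_inj
    by (auto dest: inj_onD)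
  with \<open>b = d\<close> rel1 rel2 relations_unique show "t = u" by metis
qed

lemma lead_corner_image:
  "lead_corner G ` \<Union>(SAB_squares G A B) = {{#Inl a, Inr b#} | a b. a \<in> A \<and> b \<in> B}"
proof
  show "lead_corner G ` \<Union>(SAB_squares G A B) \<subseteq> {{#Inl a, Inr b#} | a b. a \<in> A \<and> b \<in> B}"
  proof
    fix e assume "e \<in> lead_corner G ` \<Union>(SAB_squares G A B)"
    then obtain a b a' b' where "(a, b, a', b') \<in> relations G A B"
      and "e = {#Inl (inv a), Inr b#}"
      unfolding Union_SAB_squares by auto
    then show "e \<in> {{#Inl a, Inr b#} | a b. a \<in> A \<and> b \<in> B}"
      using inv_mem_A by (auto simp: relations_def)
  qed
  show "{{#Inl a, Inr b#} | a b. a \<in> A \<and> b \<in> B} \<subseteq> lead_corner G ` \<Union>(SAB_squares G A B)"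
  proof
    fix e assume "e \<in> {{#Inl a, Inr b#} | a b. a \<in> A \<and> b \<in> B}"
    then obtain a b where e: "e = {#Inl a, Inr b#}" and mem: "a \<in> A" "b \<in> B"
      by blast
    then obtain a' b' where rel: "(inv a, b, a', b') \<in> relations G A B"
      using inv_mem_A relations_exist by metis
    have "e = lead_corner G (rel_tuple G (inv a) b a' b')"
      using e mem A_carrier by auto
    moreover have "rel_tuple G (inv a) b a' b' \<in> \<Union>(SAB_squares G A B)"
      unfolding Union_SAB_squares using rel by force
    ultimately show "e \<in> lead_corner G ` \<Union>(SAB_squares G A B)" by blast
  qed
qed

theorem SAB_link_eq_complete_bipartite: "SAB_link G A B = complete_bipartite A B"
proof (rule prod_eqI)
  show "fst (SAB_link G A B) = fst (complete_bipartite A B)"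
    by (simp add: SAB_link_def complete_bipartite_def)
  have "snd (SAB_link G A B) = (\<Sum>t\<in>\<Union>(SAB_squares G A B). {#lead_corner G t#})"
    by (rule SAB_link_edges)
  also have "\<dots> = (\<Sum>e\<in>lead_corner G ` \<Union>(SAB_squares G A B). {#e#})"
    by (simp only: sum.reindex[OF inj_on_lead_corner] comp_def)
  also have "\<dots> = snd (complete_bipartite A B)"
    by (simp add: lead_corner_image complete_bipartite_def)
  finally show "snd (SAB_link G A B) = snd (complete_bipartite A B)" .
qed

end

theorem lemma1:
  fixes G :: "('a, 'b) monoid_scheme" and A B :: "'a set"
  assumes "group G"
    and "VH_structure G A B"
  shows "SAB_link G A B = complete_bipartite A B"
  using assms
  by (intro vh_group.SAB_link_eq_complete_bipartite) (simp add: vh_group_def vh_group_axioms_def)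

end
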